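(* Let $H\in(0,1)$, $\alpha\in(0,1]$, $d\ge1$ an integer, $T>0$, and let $I\subset(0,T]$ and $J\subset[0,2\pi)$ be two fixed non-trivial compact intervals. Let $\mathbf{\Delta}((t,x);(s,y)):=|x-y|^{2\alpha}+|t-s|^{\alpha\wedge(2H)}$. Then for all $N>0$ there exists a finite positive constant $C=C(I,J,N)$ such that for all $a\in[0,N]$, $$\int_Idt\int_Ids\int_Jdx\int_Jdy\ \frac{e^{-a^2/\mathbf{\Delta}((t,x);(s,y))}}{\mathbf{\Delta}((t,x);(s,y))^{d/2}}\le C\,\mathrm{K}_{d-(\frac1\alpha+\frac{2}{\alpha\wedge(2H)})}(a).$$
   Context: For $\gamma\in\mathbb{R}$ and $r>0$, $\mathrm{K}_\gamma(r)=r^{-\gamma}$ if $\gamma>0$, $\mathrm{K}_\gamma(r)=\log(N_0/r)$ if $\gamma=0$, and $\mathrm{K}_\gamma(r)=1$ if $\gamma<0$, where $N_0$ is a constant taken sufficiently large. *)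

theory Defs
  imports "HOL-Analysis.Analysis"
begin

text \<open>The kernel K_gamma(r) with the large constant N0, valued in [0,infinity];
  K_gamma(0) = infinity when gamma \<ge> 0 (r^(-gamma) resp. log(N0/r) blow up at 0).\<close>
definition Kker :: "real \<Rightarrow> real \<Rightarrow> real \<Rightarrow> ennreal" where
  "Kker N0 \<gamma> r =
     (if \<gamma> > 0 then (if r = 0 then \<infinity> else ennreal (r powr (-\<gamma>)))
      else if \<gamma> = 0 then (if r = 0 then \<infinity> else ennreal (ln (N0 / r)))
      else 1)"

definition Delta :: "real \<Rightarrow> real \<Rightarrow> real \<Rightarrow> real \<Rightarrow> real \<Rightarrow> real \<Rightarrow> real" where
  "Delta H \<alpha> t x s y = \<bar>x - y\<bar> powr (2 * \<alpha>) + \<bar>t - s\<bar> powr (min \<alpha> (2 * H))"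

end

theory Submission
  imports Defs
begin

text \<open>
  Put \<open>u = |x - y|\<close>, \<open>v = |t - s|\<close>, \<open>\<beta> = min \<alpha> (2H)\<close>, \<open>p = d/2\<close> and
  \<open>D = u^(2\<alpha>) + v^\<beta>\<close>. Since \<open>e^(-z) (1 + z)^p \<le> d^d\<close>, the integrand is at most
  \<open>d^d (a\<^sup>2 + D)^(-p)\<close>; it depends on the differences only, and integrating a function of
  \<open>x - y\<close> over a square of side \<open>L\<close> costs at most a factor \<open>2L\<close>. So everything reduces to
  \<open>\<integral>\<^sub>0\<^sup>V \<integral>\<^sub>0\<^sup>L (a\<^sup>2 + u^(2\<alpha>) + v^\<beta>)^(-p) du dv\<close>.
  Splitting \<open>\<integral> (c + u^\<kappa>)^(-r) du\<close> at \<open>u = c^(1/\<kappa>)\<close> gives \<open>O(c^(1/\<kappa> - r))\<close> if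
  \<open>\<kappa> r > 1\<close> and \<open>O(1 + log\<^sup>+ (L / c^(1/\<kappa>)))\<close> if \<open>\<kappa> r = 1\<close>. Applied first in \<open>u\<close>
  (with \<open>c = a\<^sup>2 + v^\<beta>\<close>) and then in \<open>v\<close> (with \<open>c = a\<^sup>2\<close>) this yields \<open>a^(-\<gamma>)\<close> for
  \<open>\<gamma> = d - (1/\<alpha> + 2/\<beta>) > 0\<close> and \<open>|log a|\<close> for \<open>\<gamma> = 0\<close>. For \<open>\<gamma> < 0\<close> one interpolates
  \<open>D \<ge> u^(2\<alpha>)\<close> and \<open>D \<ge> v^\<beta>\<close> to get the integrable bound \<open>u^(-e) v^(-e)\<close>, \<open>e < 1\<close>,
  uniformly in \<open>a\<close>.
\<close>

lemma exp_neg_mult_one_plus_powr_le: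
  fixes z p :: real and n :: nat
  assumes "0 \<le> z" "p \<le> real n" "1 \<le> n"
  shows "exp (-z) * (1 + z) powr p \<le> real n ^ n"
proof -
  have "(1 + z) powr p \<le> (1 + z) powr real n"
    using assms by (intro powr_mono) auto
  also have "\<dots> = (1 + z) ^ n"
    using assms by (simp add: powr_realpow)
  also have "\<dots> \<le> (real n * (1 + z / real n)) ^ n"
    using assms by (intro power_mono) (auto simp: field_simps)
  also have "\<dots> \<le> real n ^ n * exp (z / real n) ^ n"
    unfolding power_mult_distrib using assms
    by (intro mult_left_mono power_mono exp_ge_add_one_self) auto
  also have "exp (z / real n) ^ n = exp z"
    using assms by (simp flip: exp_of_nat_mult)
  finally have "(1 + z) powr p \<le> real n ^ n * exp z" .
  then have "exp (-z) * (1 + z) powr p \<le> exp (-z) * (real n ^ n * exp z)"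
    by (intro mult_left_mono) auto
  then show ?thesis
    by (simp add: exp_minus field_simps)
qed

lemma exp_neg_div_powr_le:
  fixes b D p :: real and n :: nat
  assumes "0 \<le> b" "0 \<le> D" "p \<le> real n" "1 \<le> n"
  shows "exp (- b / D) / D powr p \<le> real n ^ n * (b + D) powr (-p)"
  \<comment> \<open>For \<open>D = 0\<close> the left-hand side is \<open>0\<close>, as \<open>0 powr p = 0\<close> and \<open>x / 0 = 0\<close>.\<close>
proof (cases "D = 0")
  case False
  define z where "z = b / D"
  have "0 < D" "0 \<le> z"
    using False assms by (auto simp: z_def)
  then have "b + D = D * (1 + z)"
    by (simp add: z_def field_simps)
  then have "(b + D) powr (-p) = D powr (-p) * (1 + z) powr (-p)"
    using \<open>0 < D\<close> \<open>0 \<le> z\<close> by (simp add: powr_mult)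
  then have "exp (- b / D) / D powr p
      = exp (-z) * (1 + z) powr p * (b + D) powr (-p)"
    using \<open>0 \<le> z\<close> by (simp add: z_def powr_minus field_simps)
  also have "\<dots> \<le> real n ^ n * (b + D) powr (-p)"
    using \<open>0 \<le> z\<close> assms
    by (intro mult_right_mono exp_neg_mult_one_plus_powr_le) auto
  finally show ?thesis .
qed simp

lemma add_powr_neg_le_split:
  fixes c \<kappa> r u :: real
  assumes "0 < c" "0 < \<kappa>" "0 \<le> r" "0 \<le> u"
  shows "(c + u powr \<kappa>) powr (-r) \<le> (if u \<le> c powr (1 / \<kappa>) then c powr (-r) else u powr (-(\<kappa> * r)))"
proof (cases "u \<le> c powr (1 / \<kappa>)")
  case False
  then have "0 < u"
    using assms by (smt (verit) powr_gt_zero)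
  then have "(c + u powr \<kappa>) powr (-r) \<le> (u powr \<kappa>) powr (-r)"
    using assms by (intro powr_mono2') auto
  with False show ?thesis
    by (simp add: powr_powr)
qed (use assms in \<open>auto intro: powr_mono2'\<close>)

lemma add_powr_neg_le_mult_powr:
  fixes b x y \<theta> p :: real
  assumes "0 \<le> b" "0 < x" "0 < y" "0 \<le> \<theta>" "\<theta> \<le> 1" "0 \<le> p"
  shows "(b + x + y) powr (-p) \<le> x powr (-(\<theta> * p)) * y powr (-((1 - \<theta>) * p))"
proof -
  have "(b + x + y) powr (-p) = (b + x + y) powr (-(\<theta> * p)) * (b + x + y) powr (-((1 - \<theta>) * p))"
    by (simp add: algebra_simps flip: powr_add)
  also have "\<dots> \<le> x powr (-(\<theta> * p)) * y powr (-((1 - \<theta>) * p))"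
    using assms by (intro mult_mono powr_mono2') auto
  finally show ?thesis .
qed

lemma set_nn_integral_ennreal:
  "(\<integral>\<^sup>+u\<in>A. ennreal (f u) \<partial>M) = (\<integral>\<^sup>+u. ennreal (indicator A u * f u) \<partial>M)"
  by (auto intro!: nn_integral_cong split: split_indicator)

lemma set_nn_integral_cmult:
  fixes f :: "'a \<Rightarrow> ennreal"
  assumes "f \<in> borel_measurable M" "A \<in> sets M"
  shows "(\<integral>\<^sup>+u\<in>A. c * f u \<partial>M) = c * (\<integral>\<^sup>+u\<in>A. f u \<partial>M)"
  unfolding mult.assoc using assms by (intro nn_integral_cmult) auto

lemma nn_integral_ennreal_cmult:
  fixes f :: "real \<Rightarrow> real"
  assumes "0 \<le> c" "f \<in> borel_measurable borel" "A \<in> sets borel"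
  shows "(\<integral>\<^sup>+u\<in>A. ennreal (c * f u) \<partial>lborel) = ennreal c * (\<integral>\<^sup>+u\<in>A. ennreal (f u) \<partial>lborel)"
  using assms by (simp add: ennreal_mult' set_nn_integral_cmult)

lemma nn_integral_Icc0_mono_pos:
  fixes f g :: "real \<Rightarrow> ennreal"
  assumes "\<And>u. 0 < u \<Longrightarrow> u \<le> L \<Longrightarrow> f u \<le> g u"
  shows "(\<integral>\<^sup>+u\<in>{0..L}. f u \<partial>lborel) \<le> (\<integral>\<^sup>+u\<in>{0..L}. g u \<partial>lborel)"
  using AE_lborel_singleton[of 0]
  by (intro nn_integral_mono_AE) (auto elim!: eventually_mono split: split_indicator simp: assms)

lemma nn_integral_powr_Icc0:
  fixes e L :: real
  assumes "0 \<le> e" "e < 1" "0 \<le> L"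
  shows "(\<integral>\<^sup>+u\<in>{0..L}. ennreal (u powr (-e)) \<partial>lborel) = ennreal (L powr (1 - e) / (1 - e))"
proof -
  have "((\<lambda>u. u powr (-e)) has_integral (L powr (-e + 1) / (-e + 1))) {0..L}"
    using assms by (intro has_integral_powr_from_0) auto
  from nn_integral_has_integral_lebesgue[OF _ this] show ?thesis
    by (simp add: set_nn_integral_ennreal add.commute)
qed

lemma nn_integral_powr_Ici:
  fixes e w :: real
  assumes "1 < e" "0 < w"
  shows "(\<integral>\<^sup>+u\<in>{w..}. ennreal (u powr (-e)) \<partial>lborel) = ennreal (w powr (1 - e) / (e - 1))"
proof -
  have "-(w powr (-e + 1)) / (-e + 1) = w powr (1 - e) / (e - 1)"
    using assms by (simp add: field_simps)
  moreover have "((\<lambda>u. u powr (-e)) has_integral -(w powr (-e + 1)) / (-e + 1)) {w..}"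
    using assms by (intro has_integral_powr_to_inf) auto
  ultimately have "((\<lambda>u. u powr (-e)) has_integral w powr (1 - e) / (e - 1)) {w..}"
    by simp
  from nn_integral_has_integral_lebesgue[OF _ this] show ?thesis
    unfolding set_nn_integral_ennreal by simp
qed

lemma nn_integral_inverse_Icc:
  fixes w L :: real
  assumes "0 < w" "w \<le> L"
  shows "(\<integral>\<^sup>+u\<in>{w..L}. ennreal (1 / u) \<partial>lborel) = ennreal (ln L - ln w)"
proof -
  have "((\<lambda>u. 1 / u) has_integral (ln L - ln w)) {w..L}"
  proof (rule fundamental_theorem_of_calculus)
    fix u assume "u \<in> {w..L}"
    then have "0 < u" using assms by auto
    then show "(ln has_vector_derivative 1 / u) (at u within {w..L})"
      by (auto intro!: derivative_eq_intros simp flip: has_real_derivative_iff_has_vector_derivative)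
  qed fact
  from nn_integral_has_integral_lebesgue[OF _ this] assms show ?thesis
    unfolding set_nn_integral_ennreal by simp
qed

lemma nn_integral_split_powr_le:
  fixes K w e L :: real
  assumes "0 \<le> K" "0 < w" "1 < e"
  shows "(\<integral>\<^sup>+u\<in>{0..L}. ennreal (if u \<le> w then K else u powr (-e)) \<partial>lborel)
           \<le> ennreal (K * w + w powr (1 - e) / (e - 1))"
proof -
  have "(\<integral>\<^sup>+u\<in>{0..L}. ennreal (if u \<le> w then K else u powr (-e)) \<partial>lborel)
      \<le> (\<integral>\<^sup>+u. ennreal K * indicator {0..w} u + ennreal (u powr (-e)) * indicator {w..} u \<partial>lborel)"
    by (intro nn_integral_mono) (auto split: split_indicator)
  also have "\<dots> = ennreal K * ennreal w + ennreal (w powr (1 - e) / (e - 1))"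
    using assms by (subst nn_integral_add) (auto simp: nn_integral_cmult_indicator nn_integral_powr_Ici)
  also have "\<dots> = ennreal (K * w + w powr (1 - e) / (e - 1))"
    using assms by (simp add: ennreal_mult ennreal_plus)
  finally show ?thesis .
qed

lemma nn_integral_split_inverse_le:
  fixes K w L :: real
  assumes "0 \<le> K" "0 < w"
  shows "(\<integral>\<^sup>+u\<in>{0..L}. ennreal (if u \<le> w then K else 1 / u) \<partial>lborel)
           \<le> ennreal (K * w + max 0 (ln L - ln w))"
proof (cases "w \<le> L")
  case True
  have "(\<integral>\<^sup>+u\<in>{0..L}. ennreal (if u \<le> w then K else 1 / u) \<partial>lborel)
      \<le> (\<integral>\<^sup>+u. ennreal K * indicator {0..w} u + ennreal (1 / u) * indicator {w..L} u \<partial>lborel)"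
    by (intro nn_integral_mono) (auto split: split_indicator)
  also have "\<dots> = ennreal K * ennreal w + ennreal (ln L - ln w)"
    using assms True
    by (subst nn_integral_add) (auto simp: nn_integral_cmult_indicator nn_integral_inverse_Icc)
  also have "\<dots> \<le> ennreal (K * w + max 0 (ln L - ln w))"
    using assms True by (simp add: ennreal_mult ennreal_plus)
  finally show ?thesis .
next
  case False
  have "(\<integral>\<^sup>+u\<in>{0..L}. ennreal (if u \<le> w then K else 1 / u) \<partial>lborel)
      \<le> (\<integral>\<^sup>+u. ennreal K * indicator {0..w} u \<partial>lborel)"
    using False by (intro nn_integral_mono) (auto split: split_indicator)
  also have "\<dots> = ennreal (K * w)"
    using assms by (simp add: nn_integral_cmult_indicator ennreal_mult)
  also have "\<dots> \<le> ennreal (K * w + max 0 (ln L - ln w))"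
    by (intro ennreal_leI) auto
  finally show ?thesis .
qed

lemma nn_integral_add_powr_le:
  fixes c \<kappa> r L :: real
  assumes "0 < c" "0 < \<kappa>" "1 < \<kappa> * r"
  shows "(\<integral>\<^sup>+u\<in>{0..L}. ennreal ((c + u powr \<kappa>) powr (-r)) \<partial>lborel)
           \<le> ennreal ((1 + 1 / (\<kappa> * r - 1)) * c powr (1 / \<kappa> - r))"
proof -
  define w where "w = c powr (1 / \<kappa>)"
  have "0 < r"
    using assms by (metis less_trans zero_less_one zero_less_mult_pos)
  have bound: "(c + u powr \<kappa>) powr (-r) \<le> (if u \<le> w then c powr (-r) else u powr (-(\<kappa> * r)))"
    if "0 \<le> u" for u
    using add_powr_neg_le_split[of c \<kappa> r u] assms \<open>0 < r\<close> that by (simp add: w_def)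
  have "(\<integral>\<^sup>+u\<in>{0..L}. ennreal ((c + u powr \<kappa>) powr (-r)) \<partial>lborel)
      \<le> (\<integral>\<^sup>+u\<in>{0..L}. ennreal (if u \<le> w then c powr (-r) else u powr (-(\<kappa> * r))) \<partial>lborel)"
    by (intro nn_integral_Icc0_mono_pos ennreal_leI bound) simp
  also have "\<dots> \<le> ennreal (c powr (-r) * w + w powr (1 - \<kappa> * r) / (\<kappa> * r - 1))"
    using assms by (intro nn_integral_split_powr_le) (auto simp: w_def)
  also have "c powr (-r) * w = c powr (1 / \<kappa> - r)"
    by (simp add: w_def flip: powr_add)
  also have "w powr (1 - \<kappa> * r) = c powr (1 / \<kappa> - r)"
    using assms by (simp add: w_def powr_powr field_simps)
  finally show ?thesis
    by (simp add: algebra_simps)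
qed

lemma nn_integral_add_powr_critical_le:
  fixes c \<kappa> r L :: real
  assumes "0 < c" "0 < \<kappa>" "\<kappa> * r = 1"
  shows "(\<integral>\<^sup>+u\<in>{0..L}. ennreal ((c + u powr \<kappa>) powr (-r)) \<partial>lborel)
           \<le> ennreal (1 + max 0 (ln L - ln c / \<kappa>))"
proof -
  define w where "w = c powr (1 / \<kappa>)"
  have r: "r = 1 / \<kappa>"
    using assms by (simp add: field_simps)
  have bound: "(c + u powr \<kappa>) powr (-r) \<le> (if u \<le> w then c powr (-r) else 1 / u)" if "0 \<le> u" for u
    using add_powr_neg_le_split[of c \<kappa> r u] assms that r by (simp add: w_def split: if_split_asm)
  have "(\<integral>\<^sup>+u\<in>{0..L}. ennreal ((c + u powr \<kappa>) powr (-r)) \<partial>lborel)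
      \<le> (\<integral>\<^sup>+u\<in>{0..L}. ennreal (if u \<le> w then c powr (-r) else 1 / u) \<partial>lborel)"
    by (intro nn_integral_Icc0_mono_pos ennreal_leI bound) simp
  also have "\<dots> \<le> ennreal (c powr (-r) * w + max 0 (ln L - ln w))"
    using assms by (intro nn_integral_split_inverse_le) (auto simp: w_def)
  also have "c powr (-r) * w = 1"
    using assms by (simp add: w_def r flip: powr_add)
  also have "ln w = ln c / \<kappa>"
    using assms by (simp add: w_def ln_powr)
  finally show ?thesis .
qed

lemma nn_integral_abs_Icc_le:
  fixes g :: "real \<Rightarrow> ennreal" and l :: real
  assumes [measurable]: "g \<in> borel_measurable borel"
  shows "(\<integral>\<^sup>+w\<in>{-l..l}. g \<bar>w\<bar> \<partial>lborel) \<le> 2 * (\<integral>\<^sup>+u\<in>{0..l}. g u \<partial>lborel)"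
proof -
  have "(\<integral>\<^sup>+w\<in>{-l..l}. g \<bar>w\<bar> \<partial>lborel)
      \<le> (\<integral>\<^sup>+w. g w * indicator {0..l} w + g \<bar>w\<bar> * indicator {-l..0} w \<partial>lborel)"
    by (intro nn_integral_mono) (auto split: split_indicator)
  also have "\<dots> = (\<integral>\<^sup>+u\<in>{0..l}. g u \<partial>lborel) + (\<integral>\<^sup>+w\<in>{-l..0}. g \<bar>w\<bar> \<partial>lborel)"
    by (subst nn_integral_add) auto
  also have "(\<integral>\<^sup>+w\<in>{-l..0}. g \<bar>w\<bar> \<partial>lborel) = (\<integral>\<^sup>+u\<in>{0..l}. g u \<partial>lborel)"
    by (subst nn_integral_real_affine[where c = "-1" and t = 0])
      (auto intro!: nn_integral_cong split: split_indicator)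
  finally show ?thesis
    by (simp add: mult_2)
qed

lemma nn_integral_abs_diff_le:
  fixes g :: "real \<Rightarrow> ennreal" and c d :: real
  assumes "c \<le> d" and [measurable]: "g \<in> borel_measurable borel"
  shows "(\<integral>\<^sup>+x\<in>{c..d}. \<integral>\<^sup>+y\<in>{c..d}. g \<bar>x - y\<bar> \<partial>lborel \<partial>lborel)
           \<le> ennreal (2 * (d - c)) * (\<integral>\<^sup>+u\<in>{0..d - c}. g u \<partial>lborel)"
proof -
  define l where "l = d - c"
  define I where "I = (\<integral>\<^sup>+u\<in>{0..l}. g u \<partial>lborel)"
  have inner: "(\<integral>\<^sup>+y\<in>{c..d}. g \<bar>x - y\<bar> \<partial>lborel) \<le> 2 * I" if "x \<in> {c..d}" for x
  proof -
    have "(\<integral>\<^sup>+y\<in>{c..d}. g \<bar>x - y\<bar> \<partial>lborel) \<le> (\<integral>\<^sup>+y\<in>{x - l..x + l}. g \<bar>x - y\<bar> \<partial>lborel)"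
      using that by (intro nn_integral_mono) (auto simp: l_def split: split_indicator)
    also have "\<dots> = (\<integral>\<^sup>+w\<in>{-l..l}. g \<bar>w\<bar> \<partial>lborel)"
      by (subst nn_integral_real_affine[where c = "-1" and t = x])
        (auto intro!: nn_integral_cong split: split_indicator)
    also have "\<dots> \<le> 2 * I"
      unfolding I_def by (rule nn_integral_abs_Icc_le) fact
    finally show ?thesis .
  qed
  have "(\<integral>\<^sup>+x\<in>{c..d}. \<integral>\<^sup>+y\<in>{c..d}. g \<bar>x - y\<bar> \<partial>lborel \<partial>lborel) \<le> (\<integral>\<^sup>+x\<in>{c..d}. 2 * I \<partial>lborel)"
    using inner by (intro nn_integral_mono) (auto split: split_indicator)
  also have "\<dots> = 2 * I * ennreal l"
    using assms unfolding l_def by (subst nn_integral_cmult_indicator) auto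
  also have "\<dots> = ennreal (2 * l) * I"
    by (simp add: ennreal_mult'' mult_ac)
  finally show ?thesis
    unfolding l_def I_def .
qed

lemma nn_integral_abs_diff_rectangle_le:
  fixes F :: "real \<Rightarrow> real \<Rightarrow> ennreal" and t1 t2 x1 x2 :: real
  assumes "t1 \<le> t2" "x1 \<le> x2" and [measurable]: "case_prod F \<in> borel_measurable (borel \<Otimes>\<^sub>M borel)"
  shows "(\<integral>\<^sup>+t\<in>{t1..t2}. \<integral>\<^sup>+s\<in>{t1..t2}. \<integral>\<^sup>+x\<in>{x1..x2}. \<integral>\<^sup>+y\<in>{x1..x2}.
            F \<bar>t - s\<bar> \<bar>x - y\<bar> \<partial>lborel \<partial>lborel \<partial>lborel \<partial>lborel)
     \<le> ennreal (2 * (t2 - t1)) * ennreal (2 * (x2 - x1))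
         * (\<integral>\<^sup>+v\<in>{0..t2 - t1}. \<integral>\<^sup>+u\<in>{0..x2 - x1}. F v u \<partial>lborel \<partial>lborel)"
proof -
  define G where "G v = ennreal (2 * (x2 - x1)) * (\<integral>\<^sup>+u\<in>{0..x2 - x1}. F v u \<partial>lborel)" for v
  have [measurable]: "G \<in> borel_measurable borel"
    unfolding G_def by measurable
  have "(\<integral>\<^sup>+x\<in>{x1..x2}. \<integral>\<^sup>+y\<in>{x1..x2}. F v \<bar>x - y\<bar> \<partial>lborel \<partial>lborel) \<le> G v" for v
    unfolding G_def using assms by (intro nn_integral_abs_diff_le) measurable
  then have "(\<integral>\<^sup>+t\<in>{t1..t2}. \<integral>\<^sup>+s\<in>{t1..t2}. \<integral>\<^sup>+x\<in>{x1..x2}. \<integral>\<^sup>+y\<in>{x1..x2}.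
            F \<bar>t - s\<bar> \<bar>x - y\<bar> \<partial>lborel \<partial>lborel \<partial>lborel \<partial>lborel)
      \<le> (\<integral>\<^sup>+t\<in>{t1..t2}. \<integral>\<^sup>+s\<in>{t1..t2}. G \<bar>t - s\<bar> \<partial>lborel \<partial>lborel)"
    by (intro nn_integral_mono mult_right_mono) auto
  also have "\<dots> \<le> ennreal (2 * (t2 - t1)) * (\<integral>\<^sup>+v\<in>{0..t2 - t1}. G v \<partial>lborel)"
    using assms by (intro nn_integral_abs_diff_le) auto
  also have "(\<integral>\<^sup>+v\<in>{0..t2 - t1}. G v \<partial>lborel)
      = ennreal (2 * (x2 - x1)) * (\<integral>\<^sup>+v\<in>{0..t2 - t1}. \<integral>\<^sup>+u\<in>{0..x2 - x1}. F v u \<partial>lborel \<partial>lborel)"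
    unfolding G_def by (intro set_nn_integral_cmult) auto
  finally show ?thesis
    by (simp add: mult.assoc)
qed

definition kernel_integral :: "real \<Rightarrow> real \<Rightarrow> real \<Rightarrow> real \<Rightarrow> real \<Rightarrow> real \<Rightarrow> ennreal" where
  "kernel_integral \<alpha> \<beta> p a L V =
     (\<integral>\<^sup>+v\<in>{0..V}. \<integral>\<^sup>+u\<in>{0..L}. ennreal ((a\<^sup>2 + u powr (2 * \<alpha>) + v powr \<beta>) powr (-p)) \<partial>lborel \<partial>lborel)"

lemma kernel_integral_inner_le:
  fixes \<alpha> \<beta> p a L v :: real
  assumes "0 < \<alpha>" "1 < 2 * \<alpha> * p" "0 < a"
  shows "(\<integral>\<^sup>+u\<in>{0..L}. ennreal ((a\<^sup>2 + u powr (2 * \<alpha>) + v powr \<beta>) powr (-p)) \<partial>lborel)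
           \<le> ennreal ((1 + 1 / (2 * \<alpha> * p - 1)) * (a\<^sup>2 + v powr \<beta>) powr (-(p - 1 / (2 * \<alpha>))))"
proof -
  have "0 < a\<^sup>2 + v powr \<beta>"
    using assms by (simp add: add_pos_nonneg)
  from nn_integral_add_powr_le[OF this, of "2 * \<alpha>" p L] assms show ?thesis
    by (simp add: ac_simps)
qed

lemma kernel_integral_powr_bound:
  fixes \<alpha> \<beta> p L V :: real
  assumes "0 < \<alpha>" "0 < \<beta>" "1 / \<alpha> + 2 / \<beta> < 2 * p"
  shows "\<exists>C. \<forall>a>0. kernel_integral \<alpha> \<beta> p a L V \<le> ennreal (C * a powr (-(2 * p - (1 / \<alpha> + 2 / \<beta>))))"
proof -
  define q where "q = p - 1 / (2 * \<alpha>)"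
  define C1 where "C1 = 1 + 1 / (2 * \<alpha> * p - 1)"
  define C2 where "C2 = 1 + 1 / (\<beta> * q - 1)"
  have "1 < 2 * \<alpha> * p"
  proof -
    have "1 / \<alpha> < 2 * p"
      using assms by (smt (verit) divide_pos_pos)
    then show ?thesis
      using assms by (simp add: field_simps)
  qed
  moreover have "1 < \<beta> * q"
    using assms by (simp add: q_def field_simps)
  ultimately have "0 < C1" "0 < C2"
    by (simp_all add: C1_def C2_def add_pos_pos)
  have "kernel_integral \<alpha> \<beta> p a L V \<le> ennreal (C1 * C2 * a powr (-(2 * p - (1 / \<alpha> + 2 / \<beta>))))"
    if "0 < a" for a
  proof -
    have "kernel_integral \<alpha> \<beta> p a L V
        \<le> (\<integral>\<^sup>+v\<in>{0..V}. ennreal (C1 * (a\<^sup>2 + v powr \<beta>) powr (-q)) \<partial>lborel)"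
      unfolding kernel_integral_def C1_def q_def using assms \<open>1 < 2 * \<alpha> * p\<close> that
      by (intro nn_integral_mono mult_right_mono kernel_integral_inner_le) auto
    also have "\<dots> = ennreal C1 * (\<integral>\<^sup>+v\<in>{0..V}. ennreal ((a\<^sup>2 + v powr \<beta>) powr (-q)) \<partial>lborel)"
      using \<open>0 < C1\<close> by (intro nn_integral_ennreal_cmult) auto
    also have "\<dots> \<le> ennreal C1 * ennreal (C2 * (a\<^sup>2) powr (1 / \<beta> - q))"
      using nn_integral_add_powr_le[of "a\<^sup>2" \<beta> q V] assms \<open>1 < \<beta> * q\<close> that
      by (intro mult_left_mono) (auto simp: C2_def)
    also have "(a\<^sup>2) powr (1 / \<beta> - q) = a powr (-(2 * p - (1 / \<alpha> + 2 / \<beta>)))"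
    proof -
      have "(a\<^sup>2) powr (1 / \<beta> - q) = (a powr 2) powr (1 / \<beta> - q)"
        using that by (simp add: powr_numeral)
      also have "\<dots> = a powr (2 * (1 / \<beta> - q))"
        by (simp add: powr_powr)
      also have "2 * (1 / \<beta> - q) = -(2 * p - (1 / \<alpha> + 2 / \<beta>))"
        by (simp add: q_def algebra_simps)
      finally show ?thesis .
    qed
    finally show ?thesis
      using \<open>0 < C1\<close> by (simp add: ennreal_mult' mult.assoc)
  qed
  then show ?thesis
    by blast
qed

lemma kernel_integral_log_bound:
  fixes \<alpha> \<beta> p L V :: real
  assumes "0 < \<alpha>" "0 < \<beta>" "2 * p = 1 / \<alpha> + 2 / \<beta>"
  shows "\<exists>A B. \<forall>a>0. kernel_integral \<alpha> \<beta> p a L V \<le> ennreal (A + B * \<bar>ln a\<bar>)"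
proof -
  define q where "q = p - 1 / (2 * \<alpha>)"
  define C1 where "C1 = 1 + 1 / (2 * \<alpha> * p - 1)"
  have "2 * \<alpha> * p = 1 + 2 * \<alpha> / \<beta>"
    using assms by (simp add: field_simps)
  then have "1 < 2 * \<alpha> * p"
    using assms by simp
  then have "0 < C1"
    by (simp add: C1_def add_pos_pos)
  have "\<beta> * q = 1"
    using assms by (simp add: q_def field_simps)
  have "kernel_integral \<alpha> \<beta> p a L V \<le> ennreal (C1 * (1 + \<bar>ln V\<bar>) + C1 * (2 / \<beta>) * \<bar>ln a\<bar>)"
    if "0 < a" for a
  proof -
    have "kernel_integral \<alpha> \<beta> p a L V
        \<le> (\<integral>\<^sup>+v\<in>{0..V}. ennreal (C1 * (a\<^sup>2 + v powr \<beta>) powr (-q)) \<partial>lborel)"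
      unfolding kernel_integral_def C1_def q_def using assms \<open>1 < 2 * \<alpha> * p\<close> that
      by (intro nn_integral_mono mult_right_mono kernel_integral_inner_le) auto
    also have "\<dots> = ennreal C1 * (\<integral>\<^sup>+v\<in>{0..V}. ennreal ((a\<^sup>2 + v powr \<beta>) powr (-q)) \<partial>lborel)"
      using \<open>0 < C1\<close> by (intro nn_integral_ennreal_cmult) auto
    also have "\<dots> \<le> ennreal C1 * ennreal (1 + max 0 (ln V - ln (a\<^sup>2) / \<beta>))"
      using nn_integral_add_powr_critical_le[of "a\<^sup>2" \<beta> q V] assms \<open>\<beta> * q = 1\<close> that
      by (intro mult_left_mono) auto
    also have "\<dots> \<le> ennreal C1 * ennreal (1 + \<bar>ln V\<bar> + (2 / \<beta>) * \<bar>ln a\<bar>)"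
    proof -
      have "ln (a\<^sup>2) / \<beta> = (2 / \<beta>) * ln a"
        using that by (simp add: ln_realpow)
      moreover have "(2 / \<beta>) * (- ln a) \<le> (2 / \<beta>) * \<bar>ln a\<bar>"
        using assms by (intro mult_left_mono) auto
      ultimately show ?thesis
        using assms by (intro mult_left_mono ennreal_leI) auto
    qed
    also have "\<dots> = ennreal (C1 * (1 + \<bar>ln V\<bar>) + C1 * (2 / \<beta>) * \<bar>ln a\<bar>)"
      using \<open>0 < C1\<close> assms by (subst ennreal_mult[symmetric]) (auto simp: algebra_simps)
    finally show ?thesis .
  qed
  then show ?thesis
    by blast
qed

lemma kernel_integral_bounded:
  fixes \<alpha> \<beta> p L V :: real
  assumes "0 < \<alpha>" "0 < \<beta>" "0 < p" "2 * p < 1 / \<alpha> + 2 / \<beta>" "0 \<le> L" "0 \<le> V"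
  shows "\<exists>C. \<forall>a. kernel_integral \<alpha> \<beta> p a L V \<le> ennreal C"
proof -
  \<comment> \<open>\<open>\<theta>\<close> is chosen so that both factors of the interpolated bound carry the same exponent \<open>e\<close>.\<close>
  define \<theta> where "\<theta> = \<beta> / (2 * \<alpha> + \<beta>)"
  define e where "e = 2 * \<alpha> * \<beta> * p / (2 * \<alpha> + \<beta>)"
  have "0 \<le> e" "0 \<le> \<theta>" "\<theta> \<le> 1"
    using assms by (simp_all add: e_def \<theta>_def)
  have "e < 1"
  proof -
    have "2 * p * (\<alpha> * \<beta>) < (1 / \<alpha> + 2 / \<beta>) * (\<alpha> * \<beta>)"
      using assms by (intro mult_strict_right_mono) auto
    then show ?thesis
      using assms by (simp add: e_def field_simps)
  qed
  have exponents: "2 * \<alpha> * (\<theta> * p) = e" "\<beta> * ((1 - \<theta>) * p) = e"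
    using assms by (simp_all add: e_def \<theta>_def field_simps)
  have pointwise: "(a\<^sup>2 + u powr (2 * \<alpha>) + v powr \<beta>) powr (-p) \<le> v powr (-e) * u powr (-e)"
    if "0 < u" "0 < v" for a u v
  proof -
    have "(u powr (2 * \<alpha>)) powr (-(\<theta> * p)) = u powr (-e)"
      unfolding powr_powr exponents(1)[symmetric] by simp
    moreover have "(v powr \<beta>) powr (-((1 - \<theta>) * p)) = v powr (-e)"
      unfolding powr_powr exponents(2)[symmetric] by simp
    ultimately show ?thesis
      using add_powr_neg_le_mult_powr[of "a\<^sup>2" "u powr (2 * \<alpha>)" "v powr \<beta>" \<theta> p] assms that
        \<open>0 \<le> \<theta>\<close> \<open>\<theta> \<le> 1\<close>
      by (simp add: mult.commute)
  qed
  have "kernel_integral \<alpha> \<beta> p a L V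
      \<le> (\<integral>\<^sup>+v\<in>{0..V}. \<integral>\<^sup>+u\<in>{0..L}. ennreal (v powr (-e) * u powr (-e)) \<partial>lborel \<partial>lborel)" for a
    unfolding kernel_integral_def
    by (intro nn_integral_Icc0_mono_pos ennreal_leI pointwise) auto
  also have "\<dots> = (\<integral>\<^sup>+v\<in>{0..V}. ennreal (L powr (1 - e) / (1 - e) * v powr (-e)) \<partial>lborel)"
  proof (intro nn_integral_cong)
    fix v :: real
    have "(\<integral>\<^sup>+u\<in>{0..L}. ennreal (v powr (-e) * u powr (-e)) \<partial>lborel)
        = ennreal (v powr (-e)) * ennreal (L powr (1 - e) / (1 - e))"
      using \<open>0 \<le> e\<close> \<open>e < 1\<close> assms by (simp add: nn_integral_ennreal_cmult nn_integral_powr_Icc0)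
    also have "\<dots> = ennreal (L powr (1 - e) / (1 - e) * v powr (-e))"
      using \<open>e < 1\<close> by (subst mult.commute, intro ennreal_mult[symmetric]) auto
    finally show "(\<integral>\<^sup>+u\<in>{0..L}. ennreal (v powr (-e) * u powr (-e)) \<partial>lborel) * indicator {0..V} v
        = ennreal (L powr (1 - e) / (1 - e) * v powr (-e)) * indicator {0..V} v"
      by simp
  qed
  also have "\<dots> = ennreal (L powr (1 - e) / (1 - e)) * ennreal (V powr (1 - e) / (1 - e))"
    using \<open>0 \<le> e\<close> \<open>e < 1\<close> assms
    by (subst nn_integral_ennreal_cmult) (auto simp: nn_integral_powr_Icc0)
  also have "\<dots> = ennreal (L powr (1 - e) / (1 - e) * (V powr (1 - e) / (1 - e)))"
    using \<open>e < 1\<close> by (intro ennreal_mult[symmetric]) auto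
  finally show ?thesis
    by blast
qed

lemma Delta_integral_le_kernel_integral:
  fixes H \<alpha> t1 t2 x1 x2 a :: real and d :: nat
  assumes "t1 \<le> t2" "x1 \<le> x2" "1 \<le> d"
  shows "(\<integral>\<^sup>+t\<in>{t1..t2}. \<integral>\<^sup>+s\<in>{t1..t2}. \<integral>\<^sup>+x\<in>{x1..x2}. \<integral>\<^sup>+y\<in>{x1..x2}.
            ennreal (exp (- (a\<^sup>2) / Delta H \<alpha> t x s y) / Delta H \<alpha> t x s y powr (real d / 2))
          \<partial>lborel \<partial>lborel \<partial>lborel \<partial>lborel)
    \<le> ennreal (2 * (t2 - t1) * (2 * (x2 - x1)) * real d ^ d)
        * kernel_integral \<alpha> (min \<alpha> (2 * H)) (real d / 2) a (x2 - x1) (t2 - t1)"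
proof -
  define \<beta> where "\<beta> = min \<alpha> (2 * H)"
  define G where "G v u = ennreal (real d ^ d * (a\<^sup>2 + u powr (2 * \<alpha>) + v powr \<beta>) powr (-(real d / 2)))"
    for v u :: real
  have "ennreal (exp (- (a\<^sup>2) / Delta H \<alpha> t x s y) / Delta H \<alpha> t x s y powr (real d / 2))
      \<le> G \<bar>t - s\<bar> \<bar>x - y\<bar>" for t s x y
    using exp_neg_div_powr_le[of "a\<^sup>2" "Delta H \<alpha> t x s y" "real d / 2" d] assms
    by (auto simp: G_def Delta_def \<beta>_def add.assoc intro!: ennreal_leI)
  then have "(\<integral>\<^sup>+t\<in>{t1..t2}. \<integral>\<^sup>+s\<in>{t1..t2}. \<integral>\<^sup>+x\<in>{x1..x2}. \<integral>\<^sup>+y\<in>{x1..x2}.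
            ennreal (exp (- (a\<^sup>2) / Delta H \<alpha> t x s y) / Delta H \<alpha> t x s y powr (real d / 2))
          \<partial>lborel \<partial>lborel \<partial>lborel \<partial>lborel)
      \<le> (\<integral>\<^sup>+t\<in>{t1..t2}. \<integral>\<^sup>+s\<in>{t1..t2}. \<integral>\<^sup>+x\<in>{x1..x2}. \<integral>\<^sup>+y\<in>{x1..x2}.
            G \<bar>t - s\<bar> \<bar>x - y\<bar> \<partial>lborel \<partial>lborel \<partial>lborel \<partial>lborel)"
    by (intro nn_integral_mono mult_right_mono) auto
  also have "\<dots> \<le> ennreal (2 * (t2 - t1)) * ennreal (2 * (x2 - x1))
      * (\<integral>\<^sup>+v\<in>{0..t2 - t1}. \<integral>\<^sup>+u\<in>{0..x2 - x1}. G v u \<partial>lborel \<partial>lborel)"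
    using assms by (intro nn_integral_abs_diff_rectangle_le) (auto simp: G_def)
  also have "(\<integral>\<^sup>+v\<in>{0..t2 - t1}. \<integral>\<^sup>+u\<in>{0..x2 - x1}. G v u \<partial>lborel \<partial>lborel)
      = ennreal (real d ^ d) * kernel_integral \<alpha> \<beta> (real d / 2) a (x2 - x1) (t2 - t1)"
    by (simp add: G_def kernel_integral_def nn_integral_ennreal_cmult set_nn_integral_cmult)
  also have "ennreal (2 * (t2 - t1)) * ennreal (2 * (x2 - x1)) * (ennreal (real d ^ d) * kernel_integral \<alpha> \<beta> (real d / 2) a (x2 - x1) (t2 - t1))
      = ennreal (2 * (t2 - t1) * (2 * (x2 - x1)) * real d ^ d) * kernel_integral \<alpha> \<beta> (real d / 2) a (x2 - x1) (t2 - t1)"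
  proof -
    have "ennreal (2 * (t2 - t1)) * ennreal (2 * (x2 - x1)) * ennreal (real d ^ d)
        = ennreal (2 * (t2 - t1) * (2 * (x2 - x1)) * real d ^ d)"
      using assms by (simp add: ennreal_mult)
    then show ?thesis
      by (simp only: mult.assoc[symmetric])
  qed
  finally show ?thesis
    unfolding \<beta>_def .
qed

lemma Kker_neg_bound:
  fixes f :: "real \<Rightarrow> ennreal" and \<gamma> C N0 :: real
  assumes "\<gamma> < 0" "\<And>a. f a \<le> ennreal C"
  shows "\<exists>C'>0. \<forall>a. f a \<le> ennreal C' * Kker N0 \<gamma> a"
proof (intro exI conjI allI)
  fix a
  show "f a \<le> ennreal (max C 1) * Kker N0 \<gamma> a"
    using order.trans[OF assms(2)[of a] ennreal_leI[of C "max C 1"]] \<open>\<gamma> < 0\<close>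
    by (simp add: Kker_def)
qed simp

lemma Kker_pos_bound:
  fixes f :: "real \<Rightarrow> ennreal" and \<gamma> C N0 :: real
  assumes "0 < \<gamma>" "\<And>a. 0 < a \<Longrightarrow> f a \<le> ennreal (C * a powr (-\<gamma>))"
  shows "\<exists>C'>0. \<forall>a\<ge>0. f a \<le> ennreal C' * Kker N0 \<gamma> a"
proof (intro exI conjI allI impI)
  fix a :: real
  assume "0 \<le> a"
  show "f a \<le> ennreal (max C 1) * Kker N0 \<gamma> a"
  proof (cases "a = 0")
    case False
    then have "f a \<le> ennreal (C * a powr (-\<gamma>))"
      using \<open>0 \<le> a\<close> assms(2) by simp
    also have "\<dots> \<le> ennreal (max C 1 * a powr (-\<gamma>))"
      by (intro ennreal_leI mult_right_mono) auto
    finally show ?thesis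
      using \<open>0 < \<gamma>\<close> False by (simp add: Kker_def ennreal_mult)
  qed (use \<open>0 < \<gamma>\<close> in \<open>simp add: Kker_def\<close>)
qed simp

lemma Kker_zero_bound:
  fixes f :: "real \<Rightarrow> ennreal" and A B N N0 :: real
  assumes "0 < N" "N < N0" "\<And>a. 0 < a \<Longrightarrow> f a \<le> ennreal (A + B * \<bar>ln a\<bar>)"
  shows "\<exists>C>0. \<forall>a\<in>{0..N}. f a \<le> ennreal C * Kker N0 0 a"
proof -
  define l0 where "l0 = ln (N0 / N)"
  define K where "K = \<bar>A\<bar> + \<bar>B\<bar> * \<bar>ln N0\<bar>"
  define C where "C = K / l0 + \<bar>B\<bar> + 1"
  have "0 < l0" "0 \<le> K"
    using assms by (simp_all add: l0_def K_def)
  then have "0 < C"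
    by (simp add: C_def add_nonneg_pos)
  have "f a \<le> ennreal C * Kker N0 0 a" if "a \<in> {0..N}" for a
  proof (cases "a = 0")
    case False
    define l where "l = ln (N0 / a)"
    have "0 < a" "0 < N0"
      using that False assms by auto
    have "l0 \<le> l"
      using \<open>0 < a\<close> that assms unfolding l_def l0_def by (auto intro!: divide_left_mono)
    have "\<bar>ln a\<bar> \<le> \<bar>ln N0\<bar> + l"
      using \<open>0 < a\<close> \<open>0 < N0\<close> \<open>0 < l0\<close> \<open>l0 \<le> l\<close> by (simp add: l_def ln_div)
    then have "\<bar>B\<bar> * \<bar>ln a\<bar> \<le> \<bar>B\<bar> * (\<bar>ln N0\<bar> + l)"
      by (intro mult_left_mono) auto
    moreover have "B * \<bar>ln a\<bar> \<le> \<bar>B\<bar> * \<bar>ln a\<bar>"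
      by (intro mult_right_mono) auto
    ultimately have "A + B * \<bar>ln a\<bar> \<le> K + \<bar>B\<bar> * l"
      using abs_ge_self[of A] unfolding K_def distrib_left by linarith
    also have "\<dots> \<le> K / l0 * l + \<bar>B\<bar> * l"
      using \<open>0 \<le> K\<close> \<open>0 < l0\<close> \<open>l0 \<le> l\<close> by (simp add: field_simps mult_left_mono)
    also have "\<dots> \<le> C * l"
      using \<open>0 < l0\<close> \<open>l0 \<le> l\<close> by (simp add: C_def algebra_simps)
    finally have "ennreal (A + B * \<bar>ln a\<bar>) \<le> ennreal (C * l)"
      by (rule ennreal_leI)
    with assms(3)[OF \<open>0 < a\<close>] have "f a \<le> ennreal (C * l)"
      by (rule order.trans)
    then show ?thesis
      using False \<open>0 < C\<close> by (simp add: Kker_def l_def ennreal_mult')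
  qed (use \<open>0 < C\<close> in \<open>simp add: Kker_def\<close>)
  with \<open>0 < C\<close> show ?thesis
    by blast
qed

lemma Kker_bound:
  fixes f g :: "real \<Rightarrow> ennreal" and K \<gamma> :: real
  assumes "0 \<le> K" and f_le: "\<And>a. f a \<le> ennreal K * g a"
    and neg: "\<gamma> < 0 \<Longrightarrow> \<exists>C. \<forall>a. g a \<le> ennreal C"
    and pos: "0 < \<gamma> \<Longrightarrow> \<exists>C. \<forall>a>0. g a \<le> ennreal (C * a powr (-\<gamma>))"
    and zero: "\<gamma> = 0 \<Longrightarrow> \<exists>A B. \<forall>a>0. g a \<le> ennreal (A + B * \<bar>ln a\<bar>)"
  shows "\<forall>N>0. \<exists>M. \<forall>N0\<ge>M. \<exists>C. C > 0 \<and> (\<forall>a\<in>{0..N}. f a \<le> ennreal C * Kker N0 \<gamma> a)"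
proof (intro allI impI)
  fix N :: real
  assume "0 < N"
  have scale: "f a \<le> ennreal (K * X)" if "g a \<le> ennreal X" for a X
  proof -
    have "f a \<le> ennreal K * ennreal X"
      using f_le[of a] mult_left_mono[OF that] by (rule order.trans) simp
    with \<open>0 \<le> K\<close> show ?thesis
      by (simp add: ennreal_mult')
  qed
  consider "\<gamma> < 0" | "0 < \<gamma>" | "\<gamma> = 0"
    by linarith
  then show "\<exists>M. \<forall>N0\<ge>M. \<exists>C. C > 0 \<and> (\<forall>a\<in>{0..N}. f a \<le> ennreal C * Kker N0 \<gamma> a)"
  proof cases
    case 1
    obtain C where "\<And>a. g a \<le> ennreal C"
      using neg[OF 1] by blast
    then have f_bound: "f a \<le> ennreal (K * C)" for a
      by (rule scale)
    from Kker_neg_bound[where f = f, OF 1 f_bound] have "\<exists>C>0. \<forall>a\<in>{0..N}. f a \<le> ennreal C * Kker N0 \<gamma> a" for N0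
      by blast
    then show ?thesis
      by blast
  next
    case 2
    obtain C where g_bound: "\<And>a. 0 < a \<Longrightarrow> g a \<le> ennreal (C * a powr (-\<gamma>))"
      using pos[OF 2] by blast
    have f_bound: "f a \<le> ennreal (K * C * a powr (-\<gamma>))" if "0 < a" for a
      unfolding mult.assoc by (rule scale[OF g_bound[OF that]])
    have "\<exists>C>0. \<forall>a\<in>{0..N}. f a \<le> ennreal C * Kker N0 \<gamma> a" for N0
    proof -
      obtain C' where "0 < C'" "\<forall>a\<ge>0. f a \<le> ennreal C' * Kker N0 \<gamma> a"
        using Kker_pos_bound[where f = f, OF 2 f_bound] by blast
      then show ?thesis
        by auto
    qed
    then show ?thesis
      by blast
  next
    case 3
    obtain A B where g_bound: "\<And>a. 0 < a \<Longrightarrow> g a \<le> ennreal (A + B * \<bar>ln a\<bar>)"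
      using zero[OF 3] by blast
    have f_bound: "f a \<le> ennreal (K * A + K * B * \<bar>ln a\<bar>)" if "0 < a" for a
      unfolding mult.assoc distrib_left[symmetric] by (rule scale[OF g_bound[OF that]])
    from Kker_zero_bound[where f = f, OF \<open>0 < N\<close> _ f_bound] 3
    have "\<exists>C>0. \<forall>a\<in>{0..N}. f a \<le> ennreal C * Kker N0 \<gamma> a" if "N + 1 \<le> N0" for N0
      using that by simp
    then show ?thesis
      by blast
  qed
qed

theorem lemma4p1:
  fixes H \<alpha> T t1 t2 x1 x2 :: real and d :: nat
  assumes "0 < H" "H < 1" "0 < \<alpha>" "\<alpha> \<le> 1" "1 \<le> d" "0 < T"
    and "0 < t1" "t1 < t2" "t2 \<le> T"
    and "0 \<le> x1" "x1 < x2" "x2 < 2 * pi"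
  shows "\<forall>N>0. \<exists>M. \<forall>N0\<ge>M. \<exists>C::real. C > 0 \<and> (\<forall>a\<in>{0..N}.
    (\<integral>\<^sup>+ t\<in>{t1..t2}. \<integral>\<^sup>+ s\<in>{t1..t2}. \<integral>\<^sup>+ x\<in>{x1..x2}. \<integral>\<^sup>+ y\<in>{x1..x2}.
        ennreal (exp (- (a\<^sup>2) / Delta H \<alpha> t x s y) / Delta H \<alpha> t x s y powr (real d / 2))
      \<partial>lborel \<partial>lborel \<partial>lborel \<partial>lborel)
    \<le> ennreal C * Kker N0 (real d - (1 / \<alpha> + 2 / min \<alpha> (2 * H))) a)"
proof -
  define \<beta> where "\<beta> = min \<alpha> (2 * H)"
  define p where "p = real d / 2"
  have "0 < \<beta>" "0 < p" "t1 \<le> t2" "x1 \<le> x2"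
    using assms by (auto simp: \<beta>_def p_def)
  have exponent: "real d - (1 / \<alpha> + 2 / min \<alpha> (2 * H)) = 2 * p - (1 / \<alpha> + 2 / \<beta>)"
    by (simp add: \<beta>_def p_def)
  show ?thesis
    unfolding exponent
  proof (rule Kker_bound[where g = "\<lambda>a. kernel_integral \<alpha> \<beta> p a (x2 - x1) (t2 - t1)"])
    show "0 \<le> 2 * (t2 - t1) * (2 * (x2 - x1)) * real d ^ d"
      using assms by simp
    show "(\<integral>\<^sup>+ t\<in>{t1..t2}. \<integral>\<^sup>+ s\<in>{t1..t2}. \<integral>\<^sup>+ x\<in>{x1..x2}. \<integral>\<^sup>+ y\<in>{x1..x2}.
        ennreal (exp (- (a\<^sup>2) / Delta H \<alpha> t x s y) / Delta H \<alpha> t x s y powr (real d / 2))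
        \<partial>lborel \<partial>lborel \<partial>lborel \<partial>lborel)
      \<le> ennreal (2 * (t2 - t1) * (2 * (x2 - x1)) * real d ^ d) * kernel_integral \<alpha> \<beta> p a (x2 - x1) (t2 - t1)"
      for a
      unfolding \<beta>_def p_def using assms by (intro Delta_integral_le_kernel_integral) auto
  qed (use kernel_integral_bounded kernel_integral_powr_bound kernel_integral_log_bound
        assms \<open>0 < \<beta>\<close> \<open>0 < p\<close> \<open>t1 \<le> t2\<close> \<open>x1 \<le> x2\<close> in auto)
qed

end
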